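(* Let $n\ge2$, $m\ge2$ be integers, let $\mathcal{V}=\mathcal{V}_1\otimes\dots\otimes\mathcal{V}_m$ be a tensor product of vector spaces over a field $\mathbb{F}$, let $\{x_a : a\in[n]\}$ be a multiset of product tensors with $x_a=x_{a,1}\otimes\dots\otimes x_{a,m}$, and let $d_j=\dim\operatorname{span}\{x_{a,j}:a\in[n]\}$ for $j\in[m]$. If $\{x_a: a \in [n] \}$ forms a circuit, then $d_j >1$ for at most $n-2$ indices $j \in [m]$.
   Context: A product tensor is a non-zero tensor $z_1\otimes\dots\otimes z_m$, $z_j\in\mathcal{V}_j$. A multiset of non-zero vectors forms a circuit if it is linearly dependent and every proper sub-multiset is linearly independent. *)

theory Defs
  imports Main HOL.Vector_Spaces "HOL-Library.Function_Algebras"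
begin

text \<open>Vectors of a vector space over a field 'f are modelled as coordinate functions
  'i \<Rightarrow> 'f (w.r.t. a basis indexed by 'i); scalar multiplication is pointwise.\<close>

definition fscale :: "'f::field \<Rightarrow> ('i \<Rightarrow> 'f) \<Rightarrow> ('i \<Rightarrow> 'f)" where
  "fscale c v = (\<lambda>i. c * v i)"

lemma vector_space_fscale: "vector_space (fscale :: 'f::field \<Rightarrow> ('i \<Rightarrow> 'f) \<Rightarrow> _)"
  by unfold_locales (auto simp: fscale_def fun_eq_iff algebra_simps)

definition dim_span :: "('i \<Rightarrow> 'f::field) set \<Rightarrow> nat" where
  "dim_span S = vector_space.dim fscale (module.span fscale S)"

text \<open>Product tensor z_0 \<otimes> ... \<otimes> z_(m-1), as a coordinate function on multi-indices
  (the tensor product of the coordinate spaces is realised by products of coordinates).\<close>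
definition prod_tensor :: "nat \<Rightarrow> (nat \<Rightarrow> 'i \<Rightarrow> 'f::field) \<Rightarrow> ((nat \<Rightarrow> 'i) \<Rightarrow> 'f)" where
  "prod_tensor m z = (\<lambda>ii. \<Prod>j<m. z j (ii j))"

definition lin_dep_family :: "nat set \<Rightarrow> (nat \<Rightarrow> 't \<Rightarrow> 'f::field) \<Rightarrow> bool" where
  "lin_dep_family A y \<longleftrightarrow> (\<exists>c. (\<exists>a\<in>A. c a \<noteq> 0) \<and> (\<forall>t. (\<Sum>a\<in>A. c a * y a t) = 0))"

definition is_circuit :: "nat \<Rightarrow> (nat \<Rightarrow> 't \<Rightarrow> 'f::field) \<Rightarrow> bool" where
  "is_circuit n y \<longleftrightarrow> (\<forall>a<n. y a \<noteq> (\<lambda>_. 0)) \<and> lin_dep_family {..<n} y \<and>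
     (\<forall>B. B \<subset> {..<n} \<longrightarrow> \<not> lin_dep_family B y)"

end

(*
  Let r t be the largest size of a linearly independent subfamily of the truncated tensors
  prod_tensor t (x a), a < n, built from the first t factors. Then r 0 = 1, and r m = n - 1
  because every proper subfamily of the circuit is independent. Appending a non-zero factor
  preserves independence, so r never decreases. It even increases at every factor t whose
  vectors x a t are not all parallel: otherwise every truncated tensor expands over a maximal
  independent subfamily B using only those b whose t-th factor is parallel to its own, so the
  parallel class of x 0 t carries a proper sub-dependence of the circuit. Hence at most n - 2
  factors have vectors that are not all parallel, and only these can have span dimension > 1.
*)
theory Submission
  imports Defs
begin

definition parallel :: "('i \<Rightarrow> 'f::field) \<Rightarrow> ('i \<Rightarrow> 'f) \<Rightarrow> bool" where
  "parallel u v \<longleftrightarrow> (\<exists>\<kappa>. \<forall>i. u i = \<kappa> * v i)"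

lemma parallel_refl: "parallel u u"
  unfolding parallel_def by (intro exI[of _ 1]) simp

lemma parallel_trans: "parallel u v \<Longrightarrow> parallel v w \<Longrightarrow> parallel u w"
  unfolding parallel_def by (metis mult.assoc)

lemma parallel_sym:
  assumes "parallel u v" and "u \<noteq> (\<lambda>_. 0)"
  shows "parallel v u"
proof -
  obtain \<kappa> where \<kappa>: "\<And>i. u i = \<kappa> * v i"
    using assms(1) unfolding parallel_def by blast
  with assms(2) have "\<kappa> \<noteq> 0" by auto
  with \<kappa> have "\<And>i. v i = inverse \<kappa> * u i" by simp
  then show ?thesis unfolding parallel_def by blast
qed

lemma dim_span_le_1_if_parallel:
  fixes S :: "('i \<Rightarrow> 'f::field) set"
  assumes "\<And>v. v \<in> S \<Longrightarrow> parallel v w"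
  shows "dim_span S \<le> 1"
proof -
  interpret V: vector_space "fscale :: 'f \<Rightarrow> ('i \<Rightarrow> 'f) \<Rightarrow> _"
    by (rule vector_space_fscale)
  have "S \<subseteq> V.span {w}"
  proof
    fix v assume "v \<in> S"
    then obtain \<kappa> where "\<forall>i. v i = \<kappa> * w i"
      using assms unfolding parallel_def by blast
    then have "v = fscale \<kappa> w" unfolding fscale_def by auto
    then show "v \<in> V.span {w}" by (simp add: V.span_base V.span_scale)
  qed
  then have "V.dim S \<le> card {w}" by (intro V.dim_le_card) auto
  then show ?thesis unfolding dim_span_def by simp
qed

lemma lin_dep_family_insert_imp_lin_comb:
  fixes y :: "nat \<Rightarrow> 't \<Rightarrow> 'f::field"
  assumes "finite B" and "a \<notin> B" and indep: "\<not> lin_dep_family B y"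
    and "lin_dep_family (insert a B) y"
  obtains \<mu> where "\<And>s. y a s = (\<Sum>b\<in>B. \<mu> b * y b s)"
proof -
  obtain c where c: "\<exists>b\<in>insert a B. c b \<noteq> 0"
    and dep: "\<And>s. (\<Sum>b\<in>insert a B. c b * y b s) = 0"
    using assms(4) unfolding lin_dep_family_def by blast
  have dep': "c a * y a s + (\<Sum>b\<in>B. c b * y b s) = 0" for s
    using dep[of s] assms(1,2) by simp
  have "c a \<noteq> 0"
  proof
    assume "c a = 0"
    with c dep' have "lin_dep_family B y" unfolding lin_dep_family_def by auto
    with indep show False ..
  qed
  have "y a s = (\<Sum>b\<in>B. (- c b / c a) * y b s)" for s
    using dep'[of s] \<open>c a \<noteq> 0\<close>
    by (simp add: sum_divide_distrib[symmetric] sum_negf field_simps add_eq_0_iff)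
  then show ?thesis by (rule that)
qed

text \<open>In tensor language: if the P b are independent and \<Sum> G b \<otimes> P b = 0, then every G b = 0.
  Tensors are functions of multi-indices, P b reading the coordinates in K, G b the others.\<close>

lemma separated_sum_eq_0_imp_coeffs_eq_0:
  fixes P G :: "nat \<Rightarrow> ('k \<Rightarrow> 'i) \<Rightarrow> 'f::field"
  assumes indep: "\<not> lin_dep_family B P"
    and P_in: "\<And>b ii jj. b \<in> B \<Longrightarrow> (\<And>k. k \<in> K \<Longrightarrow> ii k = jj k) \<Longrightarrow> P b ii = P b jj"
    and G_out: "\<And>b ii jj. b \<in> B \<Longrightarrow> (\<And>k. k \<notin> K \<Longrightarrow> ii k = jj k) \<Longrightarrow> G b ii = G b jj"
    and sum_eq_0: "\<And>ii. (\<Sum>b\<in>B. G b ii * P b ii) = 0"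
    and "b \<in> B"
  shows "G b ii = 0"
proof (rule ccontr)
  assume "G b ii \<noteq> 0"
  have "(\<Sum>b\<in>B. G b ii * P b jj) = 0" for jj
  proof -
    define kk where "kk k = (if k \<in> K then jj k else ii k)" for k
    have "(\<Sum>b\<in>B. G b ii * P b jj) = (\<Sum>b\<in>B. G b kk * P b kk)"
      using P_in[of _ kk jj] G_out[of _ kk ii] by (intro sum.cong) (auto simp: kk_def)
    with sum_eq_0 show ?thesis by simp
  qed
  with \<open>b \<in> B\<close> \<open>G b ii \<noteq> 0\<close> have "lin_dep_family B P"
    unfolding lin_dep_family_def by (intro exI[of _ "\<lambda>b. G b ii"]) auto
  with indep show False ..
qed

lemma circuit_nonempty: "is_circuit n y \<Longrightarrow> 0 < n"
  unfolding is_circuit_def lin_dep_family_def by (cases n) simp_all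

lemma circuit_coeff_nonzero:
  assumes circ: "is_circuit n y"
    and dep: "\<And>s. (\<Sum>a<n. c a * y a s) = 0" and nontrivial: "\<exists>a\<in>{..<n}. c a \<noteq> 0"
    and "a < n"
  shows "c a \<noteq> 0"
proof
  assume "c a = 0"
  have "lin_dep_family ({..<n} - {a}) y"
    unfolding lin_dep_family_def
  proof (intro exI[of _ c] conjI allI)
    show "\<exists>b\<in>{..<n} - {a}. c b \<noteq> 0"
      using nontrivial \<open>c a = 0\<close> by auto
    show "(\<Sum>b\<in>{..<n} - {a}. c b * y b s) = 0" for s
      using dep[of s] \<open>a < n\<close> \<open>c a = 0\<close> by (simp add: sum_diff1)
  qed
  moreover have "{..<n} - {a} \<subset> {..<n}"
    using \<open>a < n\<close> by auto
  ultimately show False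
    using circ unfolding is_circuit_def by blast
qed

lemma circuit_vanishing_subsum:
  assumes circ: "is_circuit n y"
    and dep: "\<And>s. (\<Sum>a<n. c a * y a s) = 0" and nontrivial: "\<exists>a\<in>{..<n}. c a \<noteq> 0"
    and "C \<subseteq> {..<n}" and "a \<in> C" and sub_dep: "\<And>s. (\<Sum>a\<in>C. c a * y a s) = 0"
  shows "C = {..<n}"
proof (rule ccontr)
  assume "C \<noteq> {..<n}"
  with \<open>C \<subseteq> {..<n}\<close> have "C \<subset> {..<n}" by blast
  moreover have "lin_dep_family C y"
    unfolding lin_dep_family_def
    using circuit_coeff_nonzero[OF circ dep nontrivial] \<open>C \<subseteq> {..<n}\<close> \<open>a \<in> C\<close> sub_dep by blast
  ultimately show False
    using circ unfolding is_circuit_def by blast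
qed

definition family_rank :: "nat \<Rightarrow> (nat \<Rightarrow> 't \<Rightarrow> 'f::field) \<Rightarrow> nat" where
  "family_rank n y = Max (card ` {B. B \<subseteq> {..<n} \<and> \<not> lin_dep_family B y})"

lemma finite_indep_subfamilies: "finite {B. B \<subseteq> {..<n} \<and> \<not> lin_dep_family B y}"
  by (rule finite_subset[of _ "Pow {..<n}"]) (blast, simp)

lemma family_rank_ge:
  assumes "B \<subseteq> {..<n}" and "\<not> lin_dep_family B y"
  shows "card B \<le> family_rank n y"
  unfolding family_rank_def
  using assms by (intro Max_ge finite_imageI finite_indep_subfamilies) blast

lemma family_rank_attained:
  obtains B where "B \<subseteq> {..<n}" "\<not> lin_dep_family B y" "card B = family_rank n y"
proof -
  let ?I = "{B. B \<subseteq> {..<n} \<and> \<not> lin_dep_family B y}"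
  have "{} \<in> ?I"
    by (simp add: lin_dep_family_def)
  then have "Max (card ` ?I) \<in> card ` ?I"
    by (intro Max_in finite_imageI finite_indep_subfamilies) blast
  then obtain B where B: "B \<in> ?I" "Max (card ` ?I) = card B"
    by (rule imageE)
  show ?thesis
    by (rule that) (use B in \<open>simp_all add: family_rank_def\<close>)
qed

lemma lin_dep_family_insert_if_family_rank_le:
  assumes "B \<subseteq> {..<n}" and "family_rank n y \<le> card B" and "a < n" and "a \<notin> B"
  shows "lin_dep_family (insert a B) y"
proof (rule ccontr)
  assume "\<not> ?thesis"
  with assms(1,3) have "card (insert a B) \<le> family_rank n y"
    by (intro family_rank_ge) auto
  moreover have "finite B"
    using assms(1) finite_subset by blast
  ultimately show False
    using assms(2,4) by simp
qed

lemma family_rank_circuit_less: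
  assumes "is_circuit n y"
  shows "family_rank n y < n"
proof -
  obtain B where B: "B \<subseteq> {..<n}" "\<not> lin_dep_family B y" "card B = family_rank n y"
    by (rule family_rank_attained)
  moreover have "B \<noteq> {..<n}"
    using assms B(2) unfolding is_circuit_def by auto
  ultimately have "B \<subset> {..<n}" by blast
  then have "card B < card {..<n}"
    by (intro psubset_card_mono) auto
  with B show ?thesis by simp
qed

lemma prod_tensor_0 [simp]: "prod_tensor 0 z = (\<lambda>_. 1)"
  unfolding prod_tensor_def by simp

lemma prod_tensor_Suc: "prod_tensor (Suc t) z ii = prod_tensor t z ii * z t (ii t)"
  unfolding prod_tensor_def by simp

lemma prod_tensor_cong:
  "(\<And>k. k < t \<Longrightarrow> ii k = jj k) \<Longrightarrow> prod_tensor t z ii = prod_tensor t z jj"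
  unfolding prod_tensor_def by (rule prod.cong) auto

lemma prod_tensor_split:
  "t \<le> m \<Longrightarrow> prod_tensor m z ii = prod_tensor t z ii * (\<Prod>j\<in>{t..<m}. z j (ii j))"
  unfolding prod_tensor_def by (metis prod.atLeastLessThan_concat lessThan_atLeast0 zero_le)

lemma prod_tensor_eq_0: "j < m \<Longrightarrow> z j = (\<lambda>_. 0) \<Longrightarrow> prod_tensor m z = (\<lambda>_. 0)"
  unfolding prod_tensor_def by (auto simp: fun_eq_iff intro!: prod_zero bexI[of _ j])

lemma circuit_prod_tensor_factor_nonzero:
  assumes "is_circuit n (\<lambda>a. prod_tensor m (x a))" and "a < n" and "j < m"
  shows "x a j \<noteq> (\<lambda>_. 0)"
proof
  assume "x a j = (\<lambda>_. 0)"
  with \<open>j < m\<close> have "prod_tensor m (x a) = (\<lambda>_. 0)"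
    by (rule prod_tensor_eq_0)
  with assms(1,2) show False
    unfolding is_circuit_def by blast
qed

lemma lin_indep_prod_tensor_Suc:
  fixes x :: "nat \<Rightarrow> nat \<Rightarrow> 'i \<Rightarrow> 'f::field"
  assumes indep: "\<not> lin_dep_family B (\<lambda>a. prod_tensor t (x a))"
    and nz: "\<And>b. b \<in> B \<Longrightarrow> x b t \<noteq> (\<lambda>_. 0)"
  shows "\<not> lin_dep_family B (\<lambda>a. prod_tensor (Suc t) (x a))"
proof
  assume "lin_dep_family B (\<lambda>a. prod_tensor (Suc t) (x a))"
  then obtain c b where b: "b \<in> B" "c b \<noteq> 0"
    and dep: "\<And>ii. (\<Sum>a\<in>B. c a * prod_tensor (Suc t) (x a) ii) = 0"
    unfolding lin_dep_family_def by blast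
  have "c b * x b t (ii t) = 0" for ii :: "nat \<Rightarrow> 'i"
  proof (rule separated_sum_eq_0_imp_coeffs_eq_0[OF indep, of "{..<t}", OF _ _ _ b(1)])
    show "(\<Sum>a\<in>B. c a * x a t (ii t) * prod_tensor t (x a) ii) = 0" for ii
      using dep[of ii] by (simp add: prod_tensor_Suc mult_ac)
  qed (auto intro: prod_tensor_cong)
  with b nz show False by fastforce
qed

lemma lin_comb_coeff_nonzero_imp_parallel:
  fixes x :: "nat \<Rightarrow> nat \<Rightarrow> 'i \<Rightarrow> 'f::field"
  assumes indep: "\<not> lin_dep_family B (\<lambda>a. prod_tensor t (x a))"
    and \<mu>: "\<And>ii. prod_tensor t (x a) ii = (\<Sum>b\<in>B. \<mu> b * prod_tensor t (x b) ii)"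
    and \<nu>: "\<And>ii. prod_tensor (Suc t) (x a) ii = (\<Sum>b\<in>B. \<nu> b * prod_tensor (Suc t) (x b) ii)"
    and "b \<in> B" and "\<mu> b \<noteq> 0"
  shows "parallel (x a t) (x b t)"
proof -
  have "\<mu> b * x a t (ii t) - \<nu> b * x b t (ii t) = 0" for ii :: "nat \<Rightarrow> 'i"
  proof (rule separated_sum_eq_0_imp_coeffs_eq_0[OF indep, of "{..<t}", OF _ _ _ \<open>b \<in> B\<close>])
    fix ii :: "nat \<Rightarrow> 'i"
    have "(\<Sum>b\<in>B. (\<mu> b * x a t (ii t) - \<nu> b * x b t (ii t)) * prod_tensor t (x b) ii)
        = (\<Sum>b\<in>B. \<mu> b * prod_tensor t (x b) ii) * x a t (ii t)
          - (\<Sum>b\<in>B. \<nu> b * prod_tensor (Suc t) (x b) ii)"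
      by (simp add: prod_tensor_Suc sum_distrib_left sum_distrib_right sum_subtractf algebra_simps)
    also have "\<dots> = 0"
      unfolding \<mu>[symmetric] \<nu>[symmetric] by (simp add: prod_tensor_Suc)
    finally show "(\<Sum>b\<in>B. (\<mu> b * x a t (ii t) - \<nu> b * x b t (ii t)) * prod_tensor t (x b) ii) = 0" .
  qed (auto intro: prod_tensor_cong)
  then have "x a t i = \<nu> b / \<mu> b * x b t i" for i
    using \<open>\<mu> b \<noteq> 0\<close> by (fastforce simp: field_simps)
  then show ?thesis unfolding parallel_def by blast
qed

lemma parallel_supported_lin_comb:
  fixes x :: "nat \<Rightarrow> nat \<Rightarrow> 'i \<Rightarrow> 'f::field"
  assumes "finite B"
    and indep: "\<not> lin_dep_family B (\<lambda>b. prod_tensor t (x b))"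
    and nz: "\<And>b. b \<in> B \<Longrightarrow> x b t \<noteq> (\<lambda>_. 0)"
    and dep: "a \<notin> B \<Longrightarrow> lin_dep_family (insert a B) (\<lambda>b. prod_tensor t (x b))"
    and dep_Suc: "a \<notin> B \<Longrightarrow> lin_dep_family (insert a B) (\<lambda>b. prod_tensor (Suc t) (x b))"
  obtains \<mu> where "\<And>ii. prod_tensor t (x a) ii = (\<Sum>b\<in>B. \<mu> b * prod_tensor t (x b) ii)"
    and "\<And>b. b \<in> B \<Longrightarrow> \<mu> b \<noteq> 0 \<Longrightarrow> parallel (x a t) (x b t)"
proof (cases "a \<in> B")
  case True
  then have "B \<inter> {b. b = a} = {a}" by blast
  with \<open>finite B\<close> show ?thesis
    by (intro that[of "\<lambda>b. of_bool (b = a)"]) (simp_all add: parallel_refl)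
next
  case False
  obtain \<mu> where \<mu>: "\<And>ii. prod_tensor t (x a) ii = (\<Sum>b\<in>B. \<mu> b * prod_tensor t (x b) ii)"
    using lin_dep_family_insert_imp_lin_comb[OF \<open>finite B\<close> False indep dep[OF False]] by blast
  have indep_Suc: "\<not> lin_dep_family B (\<lambda>b. prod_tensor (Suc t) (x b))"
    using indep nz by (rule lin_indep_prod_tensor_Suc)
  obtain \<nu> where \<nu>: "\<And>ii. prod_tensor (Suc t) (x a) ii = (\<Sum>b\<in>B. \<nu> b * prod_tensor (Suc t) (x b) ii)"
    using lin_dep_family_insert_imp_lin_comb[OF \<open>finite B\<close> False indep_Suc dep_Suc[OF False]]
    by blast
  show ?thesis
    using \<mu> lin_comb_coeff_nonzero_imp_parallel[OF indep \<mu> \<nu>] by (rule that)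
qed

lemma prod_tensor_lin_comb_split:
  assumes "t \<le> m"
    and expand: "prod_tensor t (x a) ii = (\<Sum>b\<in>B. \<mu> b * prod_tensor t (x b) ii)"
  shows "prod_tensor m (x a) ii
    = (\<Sum>b\<in>B. \<mu> b * (\<Prod>j\<in>{t..<m}. x a j (ii j)) * prod_tensor t (x b) ii)"
  using prod_tensor_split[OF \<open>t \<le> m\<close>, of "x a" ii] expand
  by (simp add: sum_distrib_left mult_ac)

lemma prod_tensor_expansion_coeffs_eq_0:
  fixes x :: "nat \<Rightarrow> nat \<Rightarrow> 'i \<Rightarrow> 'f::field"
  assumes "t \<le> m"
    and indep: "\<not> lin_dep_family B (\<lambda>a. prod_tensor t (x a))"
    and expand: "\<And>a ii. a \<in> A \<Longrightarrow> prod_tensor t (x a) ii = (\<Sum>b\<in>B. \<mu> a b * prod_tensor t (x b) ii)"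
    and dep: "\<And>ii. (\<Sum>a\<in>A. c a * prod_tensor m (x a) ii) = 0"
    and "b \<in> B"
  shows "(\<Sum>a\<in>A. c a * \<mu> a b * (\<Prod>j\<in>{t..<m}. x a j (ii j))) = 0"
proof (rule separated_sum_eq_0_imp_coeffs_eq_0[where K = "{..<t}"
      and G = "\<lambda>b ii. \<Sum>a\<in>A. c a * \<mu> a b * (\<Prod>j\<in>{t..<m}. x a j (ii j))",
      OF indep _ _ _ \<open>b \<in> B\<close>])
  fix b and ii jj :: "nat \<Rightarrow> 'i"
  assume "\<And>k. k \<in> {..<t} \<Longrightarrow> ii k = jj k"
  then show "prod_tensor t (x b) ii = prod_tensor t (x b) jj"
    by (intro prod_tensor_cong) simp
next
  fix b and ii jj :: "nat \<Rightarrow> 'i"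
  assume "\<And>k. k \<notin> {..<t} \<Longrightarrow> ii k = jj k"
  then show "(\<Sum>a\<in>A. c a * \<mu> a b * (\<Prod>j\<in>{t..<m}. x a j (ii j)))
      = (\<Sum>a\<in>A. c a * \<mu> a b * (\<Prod>j\<in>{t..<m}. x a j (jj j)))"
    by (intro sum.cong refl arg_cong[where f = "\<lambda>q. _ * q"] prod.cong) auto
next
  fix ii
  have "(\<Sum>a\<in>A. c a * prod_tensor m (x a) ii)
      = (\<Sum>b\<in>B. (\<Sum>a\<in>A. c a * \<mu> a b * (\<Prod>j\<in>{t..<m}. x a j (ii j))) * prod_tensor t (x b) ii)"
    using prod_tensor_lin_comb_split[OF \<open>t \<le> m\<close> expand]
    by (simp add: sum_distrib_left sum_distrib_right sum.swap[of _ B] mult_ac)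
  with dep show "(\<Sum>b\<in>B. (\<Sum>a\<in>A. c a * \<mu> a b * (\<Prod>j\<in>{t..<m}. x a j (ii j))) * prod_tensor t (x b) ii) = 0"
    by simp
qed

lemma prod_tensor_dependence_restrict:
  fixes x :: "nat \<Rightarrow> nat \<Rightarrow> 'i \<Rightarrow> 'f::field"
  assumes "finite A" and "t \<le> m"
    and indep: "\<not> lin_dep_family B (\<lambda>a. prod_tensor t (x a))"
    and expand: "\<And>a ii. a \<in> A \<Longrightarrow> prod_tensor t (x a) ii = (\<Sum>b\<in>B. \<mu> a b * prod_tensor t (x b) ii)"
    and dep: "\<And>ii. (\<Sum>a\<in>A. c a * prod_tensor m (x a) ii) = 0"
    and closed: "\<And>a b. a \<in> A \<Longrightarrow> b \<in> B \<Longrightarrow> \<mu> a b \<noteq> 0 \<Longrightarrow> a \<in> C \<longleftrightarrow> b \<in> C"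
  shows "(\<Sum>a\<in>A \<inter> C. c a * prod_tensor m (x a) ii) = 0"
proof -
  define Q where "Q a = (\<Prod>j\<in>{t..<m}. x a j (ii j))" for a
  have restrict_term: "(if a \<in> C then c a * prod_tensor m (x a) ii else 0)
      = (\<Sum>b\<in>B. if b \<in> C then c a * \<mu> a b * Q a * prod_tensor t (x b) ii else 0)"
    if "a \<in> A" for a
  proof -
    have "(if a \<in> C then c a * \<mu> a b * Q a * prod_tensor t (x b) ii else 0)
        = (if b \<in> C then c a * \<mu> a b * Q a * prod_tensor t (x b) ii else 0)" if "b \<in> B" for b
      using closed[OF \<open>a \<in> A\<close> that] by (cases "\<mu> a b = 0") auto
    then show ?thesis
      unfolding prod_tensor_lin_comb_split[OF \<open>t \<le> m\<close> expand[OF that]] Q_def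
      by (cases "a \<in> C") (auto simp: sum_distrib_left mult_ac intro: sum.cong)
  qed
  have "(\<Sum>a\<in>A \<inter> C. c a * prod_tensor m (x a) ii)
      = (\<Sum>a\<in>A. \<Sum>b\<in>B. if b \<in> C then c a * \<mu> a b * Q a * prod_tensor t (x b) ii else 0)"
    unfolding sum.inter_restrict[OF \<open>finite A\<close>] by (rule sum.cong) (simp_all add: restrict_term)
  also have "\<dots> = (\<Sum>b\<in>B. if b \<in> C then (\<Sum>a\<in>A. c a * \<mu> a b * Q a) * prod_tensor t (x b) ii else 0)"
    by (subst sum.swap) (intro sum.cong refl, simp add: sum_distrib_right)
  also have "\<dots> = 0"
    using prod_tensor_expansion_coeffs_eq_0[OF \<open>t \<le> m\<close> indep expand dep]
    by (intro sum.neutral) (simp add: Q_def)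
  finally show ?thesis .
qed

lemma circuit_factor_parallel_if_supported_expansions:
  fixes x :: "nat \<Rightarrow> nat \<Rightarrow> 'i \<Rightarrow> 'f::field"
  assumes circ: "is_circuit n (\<lambda>a. prod_tensor m (x a))" and "t < m"
    and indep: "\<not> lin_dep_family B (\<lambda>b. prod_tensor t (x b))"
    and expand: "\<And>a ii. a < n \<Longrightarrow> prod_tensor t (x a) ii = (\<Sum>b\<in>B. \<mu> a b * prod_tensor t (x b) ii)"
    and support: "\<And>a b. a < n \<Longrightarrow> b \<in> B \<Longrightarrow> \<mu> a b \<noteq> 0 \<Longrightarrow> parallel (x a t) (x b t)"
    and "a < n"
  shows "parallel (x a t) (x 0 t)"
proof -
  let ?C = "{a. parallel (x a t) (x 0 t)}"
  have closed: "a \<in> ?C \<longleftrightarrow> b \<in> ?C" if "a \<in> {..<n}" "b \<in> B" "\<mu> a b \<noteq> 0" for a b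
  proof -
    have ab: "parallel (x a t) (x b t)"
      using support that by simp
    have ba: "parallel (x b t) (x a t)"
      using parallel_sym[OF ab] circuit_prod_tensor_factor_nonzero[OF circ _ \<open>t < m\<close>] that(1)
      by simp
    show ?thesis
      using parallel_trans[OF ab] parallel_trans[OF ba] by auto
  qed
  have "lin_dep_family {..<n} (\<lambda>a. prod_tensor m (x a))"
    using circ unfolding is_circuit_def by blast
  then obtain c where c: "\<exists>a\<in>{..<n}. c a \<noteq> 0" "\<And>ii. (\<Sum>a<n. c a * prod_tensor m (x a) ii) = 0"
    unfolding lin_dep_family_def by blast
  have "(\<Sum>a\<in>{..<n} \<inter> ?C. c a * prod_tensor m (x a) ii) = 0" for ii
  proof (rule prod_tensor_dependence_restrict[OF finite_lessThan _ indep _ c(2) closed])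
    show "t \<le> m"
      using \<open>t < m\<close> by simp
    show "prod_tensor t (x a) ii = (\<Sum>b\<in>B. \<mu> a b * prod_tensor t (x b) ii)" if "a \<in> {..<n}" for a ii
      using expand that by simp
  qed
  moreover have "0 \<in> {..<n} \<inter> ?C"
    using \<open>a < n\<close> by (simp add: parallel_refl)
  ultimately have "{..<n} \<inter> ?C = {..<n}"
    by (intro circuit_vanishing_subsum[OF circ c(2) c(1)]) simp_all
  with \<open>a < n\<close> show ?thesis by blast
qed

lemma family_rank_prod_tensor_0:
  assumes "0 < n"
  shows "1 \<le> family_rank n (\<lambda>a. prod_tensor 0 (x a))"
proof -
  have "\<not> lin_dep_family {0} (\<lambda>a. prod_tensor 0 (x a))"
    by (simp add: lin_dep_family_def)
  with assms have "card {0::nat} \<le> family_rank n (\<lambda>a. prod_tensor 0 (x a))"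
    by (intro family_rank_ge) auto
  then show ?thesis by simp
qed

lemma family_rank_prod_tensor_Suc_mono:
  fixes x :: "nat \<Rightarrow> nat \<Rightarrow> 'i \<Rightarrow> 'f::field"
  assumes "\<And>a. a < n \<Longrightarrow> x a t \<noteq> (\<lambda>_. 0)"
  shows "family_rank n (\<lambda>a. prod_tensor t (x a)) \<le> family_rank n (\<lambda>a. prod_tensor (Suc t) (x a))"
proof -
  obtain B where B: "B \<subseteq> {..<n}" "\<not> lin_dep_family B (\<lambda>a. prod_tensor t (x a))"
    "card B = family_rank n (\<lambda>a. prod_tensor t (x a))"
    by (rule family_rank_attained)
  with assms have "\<not> lin_dep_family B (\<lambda>a. prod_tensor (Suc t) (x a))"
    by (intro lin_indep_prod_tensor_Suc) auto
  with B(1) have "card B \<le> family_rank n (\<lambda>a. prod_tensor (Suc t) (x a))"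
    by (rule family_rank_ge)
  with B(3) show ?thesis by simp
qed

lemma family_rank_prod_tensor_Suc_less:
  fixes x :: "nat \<Rightarrow> nat \<Rightarrow> 'i \<Rightarrow> 'f::field"
  assumes circ: "is_circuit n (\<lambda>a. prod_tensor m (x a))" and "t < m"
    and "a' < n" and "\<not> parallel (x a' t) (x 0 t)"
  shows "family_rank n (\<lambda>a. prod_tensor t (x a)) < family_rank n (\<lambda>a. prod_tensor (Suc t) (x a))"
proof (rule ccontr)
  let ?r = "\<lambda>s. family_rank n (\<lambda>a. prod_tensor s (x a))"
  assume "\<not> ?r t < ?r (Suc t)"
  then have no_increase: "?r (Suc t) \<le> ?r t" by simp
  obtain B where B: "B \<subseteq> {..<n}" "\<not> lin_dep_family B (\<lambda>a. prod_tensor t (x a))" "card B = ?r t"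
    by (rule family_rank_attained)
  have "finite B"
    using B(1) finite_subset by blast
  have nz: "x b t \<noteq> (\<lambda>_. 0)" if "b \<in> B" for b
    using B(1) that circuit_prod_tensor_factor_nonzero[OF circ _ \<open>t < m\<close>] by blast
  have dep_insert: "lin_dep_family (insert a B) (\<lambda>a. prod_tensor s (x a))"
    if "a < n" "a \<notin> B" "?r s \<le> ?r t" for a s
    using B(1) that B(3) by (intro lin_dep_family_insert_if_family_rank_le) simp_all
  have "\<forall>a\<in>{..<n}. \<exists>\<mu>. (\<forall>ii. prod_tensor t (x a) ii = (\<Sum>b\<in>B. \<mu> b * prod_tensor t (x b) ii))
        \<and> (\<forall>b\<in>B. \<mu> b \<noteq> 0 \<longrightarrow> parallel (x a t) (x b t))"
  proof
    fix a assume "a \<in> {..<n}"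
    then have "a < n" by simp
    obtain \<mu> where "\<And>ii. prod_tensor t (x a) ii = (\<Sum>b\<in>B. \<mu> b * prod_tensor t (x b) ii)"
      and "\<And>b. b \<in> B \<Longrightarrow> \<mu> b \<noteq> 0 \<Longrightarrow> parallel (x a t) (x b t)"
      using parallel_supported_lin_comb[OF \<open>finite B\<close> B(2) nz
          dep_insert[OF \<open>a < n\<close> _ order_refl] dep_insert[OF \<open>a < n\<close> _ no_increase]]
      by blast
    then show "\<exists>\<mu>. (\<forall>ii. prod_tensor t (x a) ii = (\<Sum>b\<in>B. \<mu> b * prod_tensor t (x b) ii))
        \<and> (\<forall>b\<in>B. \<mu> b \<noteq> 0 \<longrightarrow> parallel (x a t) (x b t))"
      by (intro exI[of _ \<mu>]) auto
  qed
  from bchoice[OF this] obtain \<mu> where \<mu>: "\<forall>a\<in>{..<n}.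
      (\<forall>ii. prod_tensor t (x a) ii = (\<Sum>b\<in>B. \<mu> a b * prod_tensor t (x b) ii))
      \<and> (\<forall>b\<in>B. \<mu> a b \<noteq> 0 \<longrightarrow> parallel (x a t) (x b t))"
    by blast
  have "parallel (x a' t) (x 0 t)"
    by (rule circuit_factor_parallel_if_supported_expansions[OF circ \<open>t < m\<close> B(2) _ _ \<open>a' < n\<close>,
          where \<mu> = \<mu>]) (use \<mu> in auto)
  with \<open>\<not> parallel (x a' t) (x 0 t)\<close> show False ..
qed

lemma family_rank_prod_tensor_ge:
  fixes x :: "nat \<Rightarrow> nat \<Rightarrow> 'i \<Rightarrow> 'f::field"
  assumes circ: "is_circuit n (\<lambda>a. prod_tensor m (x a))" and "t \<le> m"
  shows "1 + card {j. j < t \<and> (\<exists>a<n. \<not> parallel (x a j) (x 0 j))}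
           \<le> family_rank n (\<lambda>a. prod_tensor t (x a))"
  using \<open>t \<le> m\<close>
proof (induction t)
  case 0
  show ?case
    using family_rank_prod_tensor_0[OF circuit_nonempty[OF circ]] by simp
next
  case (Suc t)
  let ?N = "\<lambda>t. {j. j < t \<and> (\<exists>a<n. \<not> parallel (x a j) (x 0 j))}"
  let ?r = "\<lambda>t. family_rank n (\<lambda>a. prod_tensor t (x a))"
  have "t < m"
    using Suc.prems by simp
  have IH: "1 + card (?N t) \<le> ?r t"
    using Suc by simp
  show ?case
  proof (cases "\<exists>a<n. \<not> parallel (x a t) (x 0 t)")
    case True
    then obtain a' where "a' < n" "\<not> parallel (x a' t) (x 0 t)" by blast
    have "?N (Suc t) = insert t (?N t)"
      using True by (auto simp: less_Suc_eq)
    moreover have "?r t < ?r (Suc t)"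
      by (rule family_rank_prod_tensor_Suc_less[OF circ \<open>t < m\<close> \<open>a' < n\<close> \<open>\<not> parallel (x a' t) (x 0 t)\<close>])
    ultimately show ?thesis
      using IH by simp
  next
    case False
    then have "?N (Suc t) = ?N t"
      by (auto simp: less_Suc_eq)
    moreover have "?r t \<le> ?r (Suc t)"
      using circuit_prod_tensor_factor_nonzero[OF circ _ \<open>t < m\<close>]
      by (rule family_rank_prod_tensor_Suc_mono)
    ultimately show ?thesis
      using IH by simp
  qed
qed

theorem corollary7p8:
  fixes n m :: nat
    and x :: "nat \<Rightarrow> nat \<Rightarrow> 'i \<Rightarrow> 'f::field"
  assumes "n \<ge> 2" and "m \<ge> 2"
    and "is_circuit n (\<lambda>a. prod_tensor m (x a))"
  shows "card {j. j < m \<and> dim_span ((\<lambda>a. x a j) ` {..<n}) > 1} \<le> n - 2"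
proof -
  let ?D = "{j. j < m \<and> dim_span ((\<lambda>a. x a j) ` {..<n}) > 1}"
  let ?N = "{j. j < m \<and> (\<exists>a<n. \<not> parallel (x a j) (x 0 j))}"
  have "?D \<subseteq> ?N"
  proof safe
    fix j assume "j < m" "dim_span ((\<lambda>a. x a j) ` {..<n}) > 1"
    then show "\<exists>a<n. \<not> parallel (x a j) (x 0 j)"
      using dim_span_le_1_if_parallel[of "(\<lambda>a. x a j) ` {..<n}" "x 0 j"] by force
  qed
  then have "card ?D \<le> card ?N"
    by (intro card_mono) simp_all
  moreover have "1 + card ?N \<le> family_rank n (\<lambda>a. prod_tensor m (x a))"
    using family_rank_prod_tensor_ge[OF assms(3) order_refl] .
  moreover have "family_rank n (\<lambda>a. prod_tensor m (x a)) < n"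
    using family_rank_circuit_less[OF assms(3)] .
  ultimately show ?thesis by linarith
qed

end
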